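(* For fixed $t\in(0,1)$, the map $q\mapsto M(t;q)$ is increasing on $\mathbb{R}$, and \[ \lim_{q\to-\infty}M(t;q)=t^{1/3},\qquad \lim_{q\to\infty}M(t;q)=1. \]
   Context: For $t\in(0,1)$ and $q\in\mathbb{R}$: $M(t;q)=\left(\frac{8}{15q}+\left(1-\frac{8}{15q}\right)t^q\right)^{5/(15q-8)}$ if $q\ne0,\frac8{15}$; $M(t;0)=\left(1-\frac8{15}\ln t\right)^{-5/8}$; $M(t;\frac8{15})=\exp\frac{5(t^{8/15}-1)}{8}$. *)

theory Defs
  imports "HOL-Analysis.Analysis"
begin

definition M :: "real \<Rightarrow> real \<Rightarrow> real" where
  "M t q = (if q = 0 then (1 - 8/15 * ln t) powr (-5/8)
            else if q = 8/15 then exp (5 * (t powr (8/15) - 1) / 8)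
            else (8/(15*q) + (1 - 8/(15*q)) * t powr q) powr (5/(15*q - 8)))"

end

theory Submission
  imports Defs "HOL-Real_Asymp.Real_Asymp"
begin

text \<open>Put \<open>s = -ln t > 0\<close>, \<open>c = 8s/15\<close>, \<open>y = sq\<close> and \<open>B(y) = exp(-y) + c(1 - exp(-y))/y\<close>.
  Then \<open>B(c) = 1\<close> and \<open>M(t;q) = exp(s/3 \<cdot> (ln B(y) - ln B(c))/(y - c))\<close>, so \<open>M\<close> increases in \<open>q\<close>
  because \<open>ln B\<close> is strictly convex and the secant slopes of a strictly convex function from a
  fixed point increase. Strict log-convexity \<open>B'^2 < B B''\<close> holds because \<open>B B'' - B'^2\<close> is
  \<open>c exp(-y)\<close> times a (sign-adjusted) cubic Taylor remainder of \<open>exp\<close> plus \<open>c^2\<close> times a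
  positive multiple of \<open>sinh(y/2)^2 - (y/2)^2\<close>. The secant slope tends to \<open>0\<close> as \<open>y \<rightarrow> \<infinity>\<close> and
  to \<open>-1\<close> as \<open>y \<rightarrow> -\<infinity>\<close>, giving the limits \<open>1\<close> and \<open>exp(-s/3) = t^(1/3)\<close>.\<close>

lemma exp_Taylor_cubic_remainder_pos:
  fixes x :: real
  assumes "x \<noteq> 0"
  shows "0 < (exp x - (1 + x + x\<^sup>2 / 2)) / x ^ 3"
proof -
  obtain \<xi> where "exp x = (\<Sum>m<3. x ^ m / fact m) + exp \<xi> / fact 3 * x ^ 3"
    using Maclaurin_exp_lt[OF assms, of 3] by auto
  then have "exp x - (1 + x + x\<^sup>2 / 2) = exp \<xi> / 6 * x ^ 3"
    by (simp add: eval_nat_numeral fact_numeral power2_eq_square)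
  then have "(exp x - (1 + x + x\<^sup>2 / 2)) / x ^ 3 = exp \<xi> / 6"
    using assms by simp
  then show ?thesis
    by (metis exp_gt_zero divide_pos_pos zero_less_numeral)
qed

lemma exp_diff_sq_gt:
  fixes z :: real
  assumes "z \<noteq> 0"
  shows "(2 * z)\<^sup>2 < (exp z - exp (- z))\<^sup>2"
proof -
  define a where "a = (exp z - (1 + z + z\<^sup>2 / 2)) / z ^ 3"
  define b where "b = (exp (- z) - (1 + (- z) + (- z)\<^sup>2 / 2)) / (- z) ^ 3"
  define d where "d = exp z - exp (- z) - 2 * z"
  have "0 < a" "0 < b"
    unfolding a_def b_def by (rule exp_Taylor_cubic_remainder_pos, use assms in simp)+
  have "d = (a + b) * z ^ 3"
    using assms by (simp add: a_def b_def d_def field_simps)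
  then have "d * z = (a + b) * z\<^sup>2 * z\<^sup>2"
    by (simp add: power2_eq_square power3_eq_cube)
  then have "0 < d * z"
    using \<open>0 < a\<close> \<open>0 < b\<close> assms by simp
  moreover have "(exp z - exp (- z))\<^sup>2 - (2 * z)\<^sup>2 = d\<^sup>2 + 4 * (d * z)"
    by (simp add: d_def power2_eq_square algebra_simps)
  ultimately show ?thesis
    by (smt (verit) zero_le_power2)
qed

lemma exp_neg_Taylor_cubic_remainder_pos:
  fixes y :: real
  assumes "y \<noteq> 0"
  shows "0 < (y\<^sup>2 - 2 * y + 2 - 2 * exp (- y)) / y ^ 3"
proof -
  have "0 < (exp (- y) - (1 + (- y) + (- y)\<^sup>2 / 2)) / (- y) ^ 3"
    by (rule exp_Taylor_cubic_remainder_pos) (use assms in simp)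
  also have "\<dots> = (y\<^sup>2 - 2 * y + 2 - 2 * exp (- y)) / y ^ 3 / 2"
    using assms by (simp add: field_simps)
  finally show ?thesis
    by simp
qed

lemma sq_mult_exp_neg_less:
  fixes y :: real
  assumes "y \<noteq> 0"
  shows "y\<^sup>2 * exp (- y) < (1 - exp (- y))\<^sup>2"
proof -
  define u where "u = exp (y / 2)"
  define v where "v = exp (- (y / 2))"
  have "0 < v"
    by (simp add: v_def)
  have "exp (- y) = v\<^sup>2"
    by (simp add: v_def power2_eq_square flip: exp_add)
  moreover have "1 - v\<^sup>2 = v * (u - v)"
    by (simp add: u_def v_def power2_eq_square algebra_simps flip: exp_add)
  moreover have "y\<^sup>2 < (u - v)\<^sup>2"
    using exp_diff_sq_gt[of "y / 2"] assms by (simp add: u_def v_def)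
  ultimately show ?thesis
    using \<open>0 < v\<close> by (simp add: power_mult_distrib mult.commute)
qed

lemma tendsto_compose_scale_at_top:
  fixes g :: "real \<Rightarrow> 'a :: topological_space"
  assumes "(g \<longlongrightarrow> l) at_top" "0 < s"
  shows "((\<lambda>x. g (s * x)) \<longlongrightarrow> l) at_top"
proof -
  have "filterlim (\<lambda>x. s * x) at_top at_top"
    using assms(2) by real_asymp
  with assms(1) show ?thesis
    by (rule filterlim_compose)
qed

lemma tendsto_compose_scale_at_bot:
  fixes g :: "real \<Rightarrow> 'a :: topological_space"
  assumes "(g \<longlongrightarrow> l) at_bot" "0 < s"
  shows "((\<lambda>x. g (s * x)) \<longlongrightarrow> l) at_bot"
proof -
  have "filterlim (\<lambda>x. s * x) at_bot at_bot"
    using assms(2) by real_asymp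
  with assms(1) show ?thesis
    by (rule filterlim_compose)
qed

lemma strict_mono_if_DERIV_pos_off_point:
  fixes f :: "real \<Rightarrow> real"
  assumes cont: "\<And>x. isCont f x"
    and deriv: "\<And>x. x \<noteq> a \<Longrightarrow> \<exists>d. (f has_real_derivative d) (at x) \<and> 0 < d"
  shows "strict_mono f"
proof (rule strict_monoI)
  have less: "f p < f q" if "p < q" "a \<notin> {p<..<q}" for p q
  proof (rule DERIV_pos_imp_increasing_open[OF \<open>p < q\<close>])
    fix x
    assume "p < x" "x < q"
    with that(2) have "x \<noteq> a"
      by auto
    then show "\<exists>d. (f has_real_derivative d) (at x) \<and> 0 < d"
      by (rule deriv)
  qed (simp add: continuous_at_imp_continuous_on cont)
  fix p q :: real
  assume "p < q"
  show "f p < f q"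
  proof (cases "a \<in> {p<..<q}")
    case True
    then have "f p < f a" "f a < f q"
      by (auto intro: less)
    then show ?thesis
      by simp
  next
    case False
    with \<open>p < q\<close> show ?thesis
      by (rule less)
  qed
qed

lemma strict_mono_deriv_imp_above_tangent:
  fixes f f' :: "real \<Rightarrow> real"
  assumes f': "\<And>x. (f has_real_derivative f' x) (at x)" and "strict_mono f'" and "c \<noteq> y"
  shows "f y + f' y * (c - y) < f c"
proof -
  obtain z where z: "z \<in> open_segment y c" "f c - f y = (c - y) * f' z"
  proof (cases "y < c")
    case True
    then show ?thesis
      using MVT2[of y c f f'] f' that by (auto simp: open_segment_eq_real_ivl)
  next
    case False
    then have "c < y"
      using \<open>c \<noteq> y\<close> by simp
    then show ?thesis
      using MVT2[of c y f f'] f' that by (fastforce simp: open_segment_eq_real_ivl algebra_simps)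
  qed
  have "0 < (c - y) * (f' z - f' y)"
    using z(1) \<open>strict_mono f'\<close>
    by (auto simp: open_segment_eq_real_ivl zero_less_mult_iff strict_mono_less split: if_splits)
  with z(2) show ?thesis
    by (simp add: algebra_simps)
qed

definition secant_slope :: "(real \<Rightarrow> real) \<Rightarrow> real \<Rightarrow> real \<Rightarrow> real" where
  "secant_slope f c y = (if y = c then deriv f c else (f y - f c) / (y - c))"

lemma strict_mono_secant_slope:
  fixes f f' :: "real \<Rightarrow> real"
  assumes f': "\<And>x. (f has_real_derivative f' x) (at x)" and "strict_mono f'"
  shows "strict_mono (secant_slope f c)"
proof -
  have deriv: "(secant_slope f c has_real_derivative (f' y * (y - c) - (f y - f c)) / (y - c)\<^sup>2) (at y)"
    if "y \<noteq> c" for y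
  proof (rule has_field_derivative_transform_within_open[where S = "- {c}"])
    show "((\<lambda>x. (f x - f c) / (x - c)) has_real_derivative
            (f' y * (y - c) - (f y - f c)) / (y - c)\<^sup>2) (at y)"
      using that by (auto intro!: derivative_eq_intros f' simp: power2_eq_square)
  qed (use that in \<open>auto simp: secant_slope_def\<close>)
  show ?thesis
  proof (rule strict_mono_if_DERIV_pos_off_point)
    fix y :: real
    assume "y \<noteq> c"
    moreover have "0 < (f' y * (y - c) - (f y - f c)) / (y - c)\<^sup>2"
      using strict_mono_deriv_imp_above_tangent[OF f' \<open>strict_mono f'\<close>, of c y] \<open>y \<noteq> c\<close>
      by (simp add: algebra_simps)
    ultimately show "\<exists>d. (secant_slope f c has_real_derivative d) (at y) \<and> 0 < d"
      using deriv by blast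
  next
    fix y :: real
    show "isCont (secant_slope f c) y"
    proof (cases "y = c")
      case True
      have "((\<lambda>x. (f x - f c) / (x - c)) \<longlongrightarrow> f' c) (at c)"
        using f'[of c] by (simp add: has_field_derivative_iff)
      then have "(secant_slope f c \<longlongrightarrow> f' c) (at c)"
        by (rule Lim_transform_eventually) (simp add: secant_slope_def eventually_at_filter)
      moreover have "secant_slope f c c = f' c"
        by (simp add: secant_slope_def DERIV_imp_deriv[OF f'])
      ultimately show ?thesis
        using True by (simp add: isCont_def)
    next
      case False
      then show ?thesis
        using deriv DERIV_isCont by blast
    qed
  qed
qed

definition Mbase :: "real \<Rightarrow> real \<Rightarrow> real" where
  "Mbase c y = (if y = 0 then 1 + c else exp (- y) + c * (1 - exp (- y)) / y)"

definition Mbase_deriv :: "real \<Rightarrow> real \<Rightarrow> real" where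
  "Mbase_deriv c y =
    (if y = 0 then - 1 - c / 2 else - exp (- y) + c * (y * exp (- y) - 1 + exp (- y)) / y\<^sup>2)"

definition Mbase_deriv2 :: "real \<Rightarrow> real \<Rightarrow> real" where
  "Mbase_deriv2 c y =
    exp (- y) + c * (2 - 2 * exp (- y) - 2 * y * exp (- y) - y\<^sup>2 * exp (- y)) / y ^ 3"

lemma Mbase_pos:
  assumes "0 < c"
  shows "0 < Mbase c y"
proof (cases "y = 0")
  case True
  then show ?thesis
    using assms by (simp add: Mbase_def)
next
  case False
  have "0 < (1 - exp (- y)) / y"
    using False by (cases "y > 0") (auto intro: divide_pos_pos divide_neg_neg)
  then have "0 < exp (- y) + c * ((1 - exp (- y)) / y)"
    using assms by (simp add: add_pos_pos del: times_divide_eq_right)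
  then show ?thesis
    using False by (simp add: Mbase_def)
qed

lemma Mbase_self: "c \<noteq> 0 \<Longrightarrow> Mbase c c = 1"
  by (simp add: Mbase_def)

lemma has_real_derivative_Mbase: "(Mbase c has_real_derivative Mbase_deriv c y) (at y)"
proof (cases "y = 0")
  case True
  have "((\<lambda>x. (exp (- x) + c * (1 - exp (- x)) / x - (1 + c)) / x) \<longlongrightarrow> - 1 - c / 2) (at 0)"
    by real_asymp
  then have "((\<lambda>x. (Mbase c x - Mbase c 0) / (x - 0)) \<longlongrightarrow> - 1 - c / 2) (at 0)"
    by (rule Lim_transform_eventually) (simp add: Mbase_def eventually_at_filter)
  then show ?thesis
    using True by (simp add: has_field_derivative_iff Mbase_deriv_def)
next
  case False
  have "((\<lambda>x. exp (- x) + c * (1 - exp (- x)) / x) has_real_derivative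
          - exp (- y) + c * (y * exp (- y) - 1 + exp (- y)) / y\<^sup>2) (at y)"
    using False by (auto intro!: derivative_eq_intros simp: field_simps power2_eq_square)
  then have "(Mbase c has_real_derivative
      - exp (- y) + c * (y * exp (- y) - 1 + exp (- y)) / y\<^sup>2) (at y)"
    by (rule has_field_derivative_transform_within_open[where S = "- {0}"])
       (use False in \<open>auto simp: Mbase_def\<close>)
  then show ?thesis
    using False by (simp add: Mbase_deriv_def)
qed

lemma has_real_derivative_Mbase_deriv:
  assumes "y \<noteq> 0"
  shows "(Mbase_deriv c has_real_derivative Mbase_deriv2 c y) (at y)"
proof (rule has_field_derivative_transform_within_open[where S = "- {0}"])
  show "((\<lambda>x. - exp (- x) + c * (x * exp (- x) - 1 + exp (- x)) / x\<^sup>2)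
          has_real_derivative Mbase_deriv2 c y) (at y)"
    using assms by (auto intro!: derivative_eq_intros
        simp: Mbase_deriv2_def field_simps power2_eq_square power3_eq_cube)
qed (use assms in \<open>auto simp: Mbase_deriv_def\<close>)

lemma isCont_Mbase_deriv: "isCont (Mbase_deriv c) y"
proof (cases "y = 0")
  case True
  have "((\<lambda>x. - exp (- x) + c * (x * exp (- x) - 1 + exp (- x)) / x\<^sup>2) \<longlongrightarrow> - 1 - c / 2) (at 0)"
    by real_asymp
  then have "(Mbase_deriv c \<longlongrightarrow> - 1 - c / 2) (at 0)"
    by (rule Lim_transform_eventually) (simp add: Mbase_deriv_def eventually_at_filter)
  then show ?thesis
    using True by (simp add: isCont_def Mbase_deriv_def)
next
  case False
  then show ?thesis
    using has_real_derivative_Mbase_deriv DERIV_isCont by blast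
qed

lemma Mbase_strictly_log_convex:
  assumes "0 < c" "y \<noteq> 0"
  shows "(Mbase_deriv c y)\<^sup>2 < Mbase c y * Mbase_deriv2 c y"
proof -
  define r where "r = (y\<^sup>2 - 2 * y + 2 - 2 * exp (- y)) / y ^ 3"
  define q where "q = ((1 - exp (- y))\<^sup>2 - y\<^sup>2 * exp (- y)) / y ^ 4"
  have "0 < r"
    using exp_neg_Taylor_cubic_remainder_pos[OF assms(2)] by (simp add: r_def)
  have "0 < q"
    using sq_mult_exp_neg_less[OF assms(2)] assms(2) by (simp add: q_def)
  have "Mbase c y * Mbase_deriv2 c y - (Mbase_deriv c y)\<^sup>2 = c * exp (- y) * r + c\<^sup>2 * q"
    using assms(2) by (simp add: Mbase_def Mbase_deriv_def Mbase_deriv2_def r_def q_def field_simps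
        power2_eq_square power3_eq_cube power4_eq_xxxx)
  moreover have "0 < c * exp (- y) * r + c\<^sup>2 * q"
    using \<open>0 < r\<close> \<open>0 < q\<close> assms(1) by (intro add_pos_pos mult_pos_pos) simp_all
  ultimately show ?thesis
    by simp
qed

lemma has_real_derivative_ln_Mbase:
  assumes "0 < c"
  shows "((\<lambda>y. ln (Mbase c y)) has_real_derivative Mbase_deriv c y / Mbase c y) (at y)"
  using DERIV_chain2[OF DERIV_ln[OF Mbase_pos[OF assms]] has_real_derivative_Mbase]
  by (simp add: divide_inverse mult.commute)

lemma strict_mono_ln_Mbase_deriv:
  assumes "0 < c"
  shows "strict_mono (\<lambda>y. Mbase_deriv c y / Mbase c y)"
proof (rule strict_mono_if_DERIV_pos_off_point)
  fix y :: real
  show "isCont (\<lambda>y. Mbase_deriv c y / Mbase c y) y"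
    using Mbase_pos[OF assms, of y]
    by (intro isCont_divide isCont_Mbase_deriv DERIV_isCont[OF has_real_derivative_Mbase]) simp
next
  fix y :: real
  assume "y \<noteq> 0"
  have "((\<lambda>y. Mbase_deriv c y / Mbase c y) has_real_derivative
      (Mbase_deriv2 c y * Mbase c y - Mbase_deriv c y * Mbase_deriv c y) / (Mbase c y * Mbase c y)) (at y)"
    using Mbase_pos[OF assms, of y]
    by (intro DERIV_divide has_real_derivative_Mbase_deriv[OF \<open>y \<noteq> 0\<close>] has_real_derivative_Mbase) simp
  moreover have "0 < (Mbase_deriv2 c y * Mbase c y - Mbase_deriv c y * Mbase_deriv c y) / (Mbase c y * Mbase c y)"
    using Mbase_strictly_log_convex[OF assms \<open>y \<noteq> 0\<close>] Mbase_pos[OF assms, of y]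
    by (simp add: power2_eq_square mult.commute)
  ultimately show "\<exists>d. ((\<lambda>y. Mbase_deriv c y / Mbase c y) has_real_derivative d) (at y) \<and> 0 < d"
    by blast
qed

lemma strict_mono_secant_slope_ln_Mbase:
  assumes "0 < c"
  shows "strict_mono (secant_slope (\<lambda>y. ln (Mbase c y)) c)"
  using has_real_derivative_ln_Mbase[OF assms] strict_mono_ln_Mbase_deriv[OF assms]
  by (rule strict_mono_secant_slope)

lemma secant_slope_ln_Mbase:
  assumes "0 < c"
  shows "secant_slope (\<lambda>y. ln (Mbase c y)) c y =
    (if y = c then Mbase_deriv c c else ln (Mbase c y) / (y - c))"
  using assms by (simp add: secant_slope_def Mbase_self DERIV_imp_deriv[OF has_real_derivative_ln_Mbase])

lemma secant_slope_ln_Mbase_at_top: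
  assumes "0 < c"
  shows "(secant_slope (\<lambda>y. ln (Mbase c y)) c \<longlongrightarrow> 0) at_top"
proof -
  have "((\<lambda>y. ln (exp (- y) + c * (1 - exp (- y)) / y) / (y - c)) \<longlongrightarrow> 0) at_top"
    using assms by real_asymp
  moreover have "eventually (\<lambda>y. ln (exp (- y) + c * (1 - exp (- y)) / y) / (y - c) =
      secant_slope (\<lambda>y. ln (Mbase c y)) c y) at_top"
    using eventually_gt_at_top[of c]
    by eventually_elim (use assms in \<open>simp add: secant_slope_ln_Mbase, simp add: Mbase_def\<close>)
  ultimately show ?thesis
    by (rule Lim_transform_eventually)
qed

lemma secant_slope_ln_Mbase_at_bot:
  assumes "0 < c"
  shows "(secant_slope (\<lambda>y. ln (Mbase c y)) c \<longlongrightarrow> - 1) at_bot"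
proof -
  have "((\<lambda>y. ln (exp (- y) + c * (1 - exp (- y)) / y) / (y - c)) \<longlongrightarrow> - 1) at_bot"
    using assms by real_asymp
  moreover have "eventually (\<lambda>y. ln (exp (- y) + c * (1 - exp (- y)) / y) / (y - c) =
      secant_slope (\<lambda>y. ln (Mbase c y)) c y) at_bot"
    using eventually_gt_at_bot[of 0]
    by eventually_elim (use assms in \<open>simp add: secant_slope_ln_Mbase, simp add: Mbase_def\<close>)
  ultimately show ?thesis
    by (rule Lim_transform_eventually)
qed

lemma M_eq_exp_secant_slope:
  fixes t q :: real
  assumes "0 < t" "t < 1"
  defines "s \<equiv> - ln t"
  defines "c \<equiv> 8 / 15 * s"
  shows "M t q = exp (s / 3 * secant_slope (\<lambda>y. ln (Mbase c y)) c (s * q))"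
proof -
  have "0 < s" "0 < c"
    using assms by (simp_all add: s_def c_def)
  have powr_t: "t powr x = exp (- (s * x))" for x
    using assms by (simp add: powr_def s_def)
  consider "q = 0" | "q = 8 / 15" | "q \<noteq> 0" "q \<noteq> 8 / 15"
    by blast
  then show ?thesis
  proof cases
    case 1
    have "M t q = exp (- 5 / 8 * ln (1 + c))"
      using 1 \<open>0 < c\<close> by (simp add: M_def powr_def s_def c_def)
    moreover have "secant_slope (\<lambda>y. ln (Mbase c y)) c (s * q) = - ln (1 + c) / c"
      using 1 \<open>0 < c\<close> by (simp add: secant_slope_ln_Mbase, simp add: Mbase_def)
    ultimately show ?thesis
      using \<open>0 < s\<close> by (simp add: c_def field_simps)
  next
    case 2
    then have "s * q = c"
      by (simp add: c_def)
    then show ?thesis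
      using 2 \<open>0 < c\<close> \<open>0 < s\<close>
      by (simp add: M_def powr_t secant_slope_ln_Mbase Mbase_deriv_def c_def field_simps power2_eq_square)
  next
    case 3
    then have "s * q \<noteq> 0" "s * q \<noteq> c"
      using \<open>0 < s\<close> by (simp_all add: c_def)
    have "8 / (15 * q) + (1 - 8 / (15 * q)) * t powr q = Mbase c (s * q)"
      using 3 \<open>0 < s\<close> by (simp add: powr_t Mbase_def c_def field_simps)
    moreover have "5 / (15 * q - 8) = s / 3 / (s * q - c)"
      using 3 \<open>0 < s\<close> by (simp add: c_def field_simps)
    ultimately show ?thesis
      using 3 \<open>s * q \<noteq> c\<close> Mbase_pos[OF \<open>0 < c\<close>, of "s * q"]
      by (simp add: M_def powr_def secant_slope_ln_Mbase[OF \<open>0 < c\<close>])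
  qed
qed

theorem lemma9:
  fixes t :: real
  assumes "0 < t" "t < 1"
  shows "strict_mono (\<lambda>q. M t q)
    \<and> ((\<lambda>q. M t q) \<longlongrightarrow> t powr (1/3)) at_bot
    \<and> ((\<lambda>q. M t q) \<longlongrightarrow> 1) at_top"
proof -
  define s where "s = - ln t"
  define c where "c = 8 / 15 * s"
  define G where "G = secant_slope (\<lambda>y. ln (Mbase c y)) c"
  have "0 < s" "0 < c"
    using assms by (simp_all add: s_def c_def)
  have M_eq: "(\<lambda>q. M t q) = (\<lambda>q. exp (s / 3 * G (s * q)))"
    using M_eq_exp_secant_slope[OF assms] by (simp add: G_def s_def c_def)
  have "strict_mono G" "(G \<longlongrightarrow> - 1) at_bot" "(G \<longlongrightarrow> 0) at_top"
    using \<open>0 < c\<close> unfolding G_def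
    by (simp_all add: strict_mono_secant_slope_ln_Mbase secant_slope_ln_Mbase_at_bot
        secant_slope_ln_Mbase_at_top)
  then have "strict_mono (\<lambda>q. exp (s / 3 * G (s * q)))"
    using \<open>0 < s\<close> by (simp add: strict_mono_def)
  moreover have "((\<lambda>q. exp (s / 3 * G (s * q))) \<longlongrightarrow> exp (s / 3 * - 1)) at_bot"
    using tendsto_compose_scale_at_bot[OF \<open>(G \<longlongrightarrow> - 1) at_bot\<close> \<open>0 < s\<close>] by (intro tendsto_intros)
  moreover have "((\<lambda>q. exp (s / 3 * G (s * q))) \<longlongrightarrow> exp (s / 3 * 0)) at_top"
    using tendsto_compose_scale_at_top[OF \<open>(G \<longlongrightarrow> 0) at_top\<close> \<open>0 < s\<close>] by (intro tendsto_intros)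
  moreover have "exp (s / 3 * - 1) = t powr (1 / 3)"
    using assms by (simp add: powr_def s_def)
  ultimately show ?thesis
    unfolding M_eq by simp
qed

end
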